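(* Let $r$ be an odd prime and $q=2^m$ with $m\ge1$. Then $\Gamma L_1(1,q^r)=\Gamma L(1,q^r)\cap SL(r,q)$ acts transitively on $\mathbb{F}_{q^r}\setminus\{0\}$ if and only if $q=2$.
   Context: Regard $\mathbb{F}_{q^r}$ as an $r$-dimensional $\mathbb{F}_q$-vector space, so $GL(r,q)=GL_{\mathbb{F}_q}(\mathbb{F}_{q^r})$. Let $\alpha$ generate $\mathbb{F}_{q^r}^*$, let $\tau(z)=\alpha z$ and $\sigma(z)=z^q$. $\Gamma L(1,q^r)$ is the subgroup of $GL(r,q)$ generated by $\tau$ and $\sigma$, and $\Gamma L_1(1,q^r)$ is its intersection with $SL(r,q)$. *)

theory Defs
  imports "HOL-Algebra.Generated_Groups" "HOL-Algebra.Bij" "Jordan_Normal_Form.Determinant"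
begin

text \<open>The field K = F_{q^r} is a finite field type 'k; the subfield F_q is the set of
  fixed points of the q-th power map.\<close>

definition Fq :: "nat \<Rightarrow> 'k::field set" where
  "Fq q = {x. x ^ q = x}"

definition Fq_linear :: "nat \<Rightarrow> ('k::field \<Rightarrow> 'k) \<Rightarrow> bool" where
  "Fq_linear q f \<longleftrightarrow> (\<forall>x y. f (x + y) = f x + f y) \<and> (\<forall>c \<in> Fq q. \<forall>x. f (c * x) = c * f x)"

definition Fq_basis :: "nat \<Rightarrow> nat \<Rightarrow> (nat \<Rightarrow> 'k::field) \<Rightarrow> bool" where
  "Fq_basis q r b \<longleftrightarrow> (\<forall>x. \<exists>!c. (\<forall>i<r. c i \<in> Fq q) \<and> (\<forall>i\<ge>r. c i = 0) \<and> x = (\<Sum>i<r. c i * b i))"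

definition Fq_coords :: "nat \<Rightarrow> nat \<Rightarrow> (nat \<Rightarrow> 'k::field) \<Rightarrow> 'k \<Rightarrow> nat \<Rightarrow> 'k" where
  "Fq_coords q r b x = (THE c. (\<forall>i<r. c i \<in> Fq q) \<and> (\<forall>i\<ge>r. c i = 0) \<and> x = (\<Sum>i<r. c i * b i))"

definition Fq_det :: "nat \<Rightarrow> nat \<Rightarrow> ('k::field \<Rightarrow> 'k) \<Rightarrow> 'k" where
  "Fq_det q r f = (let b = (SOME b. Fq_basis q r b) in
      det (mat r r (\<lambda>(i, j). Fq_coords q r b (f (b j)) i)))"

definition GL_Fq :: "nat \<Rightarrow> ('k::field \<Rightarrow> 'k) set" where
  "GL_Fq q = {f. bij f \<and> Fq_linear q f}"

definition SL_Fq :: "nat \<Rightarrow> nat \<Rightarrow> ('k::field \<Rightarrow> 'k) set" where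
  "SL_Fq q r = {f \<in> GL_Fq q. Fq_det q r f = 1}"

definition GammaL :: "nat \<Rightarrow> 'k::field \<Rightarrow> ('k \<Rightarrow> 'k) set" where
  "GammaL q \<alpha> = generate (BijGroup (UNIV :: 'k set)) {(\<lambda>z. \<alpha> * z), (\<lambda>z. z ^ q)}"

definition GammaL1 :: "nat \<Rightarrow> nat \<Rightarrow> 'k::field \<Rightarrow> ('k \<Rightarrow> 'k) set" where
  "GammaL1 q r \<alpha> = GammaL q \<alpha> \<inter> SL_Fq q r"

definition transitive_on_nonzero :: "('k::field \<Rightarrow> 'k) set \<Rightarrow> bool" where
  "transitive_on_nonzero G \<longleftrightarrow> (\<forall>x y. x \<noteq> 0 \<longrightarrow> y \<noteq> 0 \<longrightarrow> (\<exists>g \<in> G. g x = y))"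

end

theory Submission
  imports Defs "HOL-Computational_Algebra.Primes" "HOL-Computational_Algebra.Polynomial"
begin

(* Every element of \<Gamma>L(1,q^r) has the form \<tau>^i \<sigma>^j : z \<mapsto> \<alpha>^i z^(q^j), and its determinant
   over F_q is the norm \<alpha>^(i N), N = 1 + q + ... + q^(r-1) = (q^r - 1)/(q - 1). Indeed, for any
   F_q-basis b the coordinate matrix G of z \<mapsto> \<beta> z^(q^j) satisfies G^T M = M Q, where
   M = (b_i^(q^k)) is the invertible Moore matrix and Q is a cyclic shift weighted by the \<beta>^(q^k);
   in characteristic 2 the shift has determinant 1.
   If \<Gamma>L_1(1,q^r) is transitive, some \<tau>^i \<sigma>^j in it maps 1 to \<alpha>, so \<alpha>^i = \<alpha> and \<alpha>^N = 1;
   since \<alpha> has order q^r - 1 = N (q - 1), this forces q = 2. Conversely, for q = 2 we have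
   N = q^r - 1, so every multiplication z \<mapsto> \<alpha>^n z has determinant 1, and these already act
   transitively on the nonzero elements. *)


(* The library's finite_field_power_card_eq_same is stated for the sort finite_field, which
   the sort {field,finite} does not provide. *)
lemma power_card_eq_self:
  fixes x :: "'a::{field,finite}"
  shows "x ^ card (UNIV :: 'a set) = x"
proof (cases "x = 0")
  case False
  let ?U = "UNIV - {0::'a}"
  have "(\<Prod>y\<in>?U. x * y) = (\<Prod>y\<in>?U. y)"
    by (rule prod.reindex_bij_witness[of _ "\<lambda>y. y / x" "\<lambda>y. x * y"]) (use False in auto)
  then have "x ^ card ?U = 1"
    by (simp add: prod.distrib)
  moreover have "card (UNIV :: 'a set) = Suc (card ?U)"
    by (simp add: card_Diff_singleton finite_UNIV_card_ge_0)
  then have "x ^ card (UNIV :: 'a set) = x * x ^ card ?U"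
    by (simp only: power_Suc)
  ultimately show ?thesis
    by (simp only: mult_1_right)
qed (simp add: finite_UNIV_card_ge_0)

lemma CHAR_eq_2_if_even_card:
  assumes "even (card (UNIV :: 'a::{field,finite} set))"
  shows "CHAR('a) = 2"
proof -
  have "(-1 :: 'a) = 1"
    using power_card_eq_self[of "-1 :: 'a"] assms by simp
  then have "(1 :: 'a) + 1 = 0"
    by (metis add.right_inverse)
  then have "of_nat 2 = (0 :: 'a)"
    by simp
  then have dvd: "CHAR('a) dvd 2"
    by (simp only: of_nat_eq_0_iff_char_dvd)
  then have "CHAR('a) \<noteq> 0"
    by (metis dvd_0_left_iff zero_neq_numeral)
  moreover have "CHAR('a) \<le> 2"
    using dvd by (simp add: dvd_imp_le)
  ultimately show ?thesis
    using CHAR_not_1[where 'a = 'a] by linarith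
qed

lemma det_eq_1_if_orthogonal_CHAR_2:
  fixes A :: "'a::idom mat"
  assumes "CHAR('a) = 2" and A: "A \<in> carrier_mat n n" and "transpose_mat A * A = 1\<^sub>m n"
  shows "det A = 1"
proof -
  have "det A * det A = 1"
    using assms det_mult[of "transpose_mat A" n A] det_transpose[OF A] by simp
  moreover have "(2::'a) = 0"
    using of_nat_CHAR[where 'a = 'a] unfolding assms(1) by simp
  ultimately have "(det A + 1) * (det A + 1) = 0"
    by (simp add: algebra_simps mult_2_right[symmetric])
  then show ?thesis
    using uminus_CHAR_2[OF assms(1)] by (simp add: add_eq_0_iff2)
qed

definition shift_mat :: "nat \<Rightarrow> nat \<Rightarrow> 'a::{zero,one} mat" where
  "shift_mat n j = mat n n (\<lambda>(i, k). if i = (k + j) mod n then 1 else 0)"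

lemma shift_mat_orthogonal:
  "transpose_mat (shift_mat n j) * shift_mat n j = (1\<^sub>m n :: 'a::semiring_1 mat)"
proof (rule eq_matI)
  fix k l assume "k < dim_row (1\<^sub>m n :: 'a mat)" "l < dim_col (1\<^sub>m n :: 'a mat)"
  then have kl: "k < n" "l < n" by auto
  have "(transpose_mat (shift_mat n j) * shift_mat n j) $$ (k, l) =
      (\<Sum>i = 0..<n. (if i = (k + j) mod n then 1 else 0) * (if i = (l + j) mod n then 1 else (0::'a)))"
    using kl unfolding shift_mat_def by (simp add: scalar_prod_def)
  also have "\<dots> = (\<Sum>i = 0..<n. if i = (k + j) mod n then (if k = l then 1 else 0) else 0)"
  proof (intro sum.cong refl)
    have "(k + j) mod n = (l + j) mod n \<longleftrightarrow> k mod n = l mod n"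
      by (simp add: nat_mod_eq_iff)
    then show "\<And>i. (if i = (k + j) mod n then 1 else 0) * (if i = (l + j) mod n then 1 else 0) =
        (if i = (k + j) mod n then (if k = l then 1 else 0) else (0::'a))"
      using kl by auto
  qed
  also have "\<dots> = 1\<^sub>m n $$ (k, l)"
    using kl by (simp add: sum.delta')
  finally show "(transpose_mat (shift_mat n j) * shift_mat n j) $$ (k, l) =
      (1\<^sub>m n :: 'a mat) $$ (k, l)" .
qed (auto simp: shift_mat_def)

lemma det_weighted_shift_mat_CHAR_2:
  fixes d :: "nat \<Rightarrow> 'a::idom"
  assumes "CHAR('a) = 2"
  shows "det (mat n n (\<lambda>(i, k). if i = (k + j) mod n then d k else 0)) = (\<Prod>k<n. d k)"
    (is "det ?W = _")
proof -
  define D where "D = mat n n (\<lambda>(i, k). if i = k then d k else 0)"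
  have "shift_mat n j * D = ?W"
  proof (rule eq_matI)
    fix i k assume "i < dim_row ?W" "k < dim_col ?W"
    then have ik: "i < n" "k < n" by auto
    have "(shift_mat n j * D) $$ (i, k) =
        (\<Sum>l = 0..<n. (if i = (l + j) mod n then 1 else 0) * (if l = k then d k else 0))"
      using ik unfolding shift_mat_def D_def by (simp add: scalar_prod_def)
    also have "\<dots> = (\<Sum>l = 0..<n. if l = k then (if i = (k + j) mod n then d k else 0) else 0)"
      by (intro sum.cong) auto
    also have "\<dots> = ?W $$ (i, k)"
      using ik by (simp add: sum.delta')
    finally show "(shift_mat n j * D) $$ (i, k) = ?W $$ (i, k)" .
  qed (auto simp: shift_mat_def D_def)
  moreover have "det (shift_mat n j :: 'a mat) = 1"
    using det_eq_1_if_orthogonal_CHAR_2[OF assms _ shift_mat_orthogonal] by (simp add: shift_mat_def)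
  moreover have "det D = (\<Prod>k<n. d k)"
  proof -
    have "upper_triangular D" "D \<in> carrier_mat n n"
      unfolding D_def upper_triangular_def by auto
    then have "det D = prod_list (diag_mat D)"
      by (rule det_upper_triangular)
    also have "\<dots> = (\<Prod>k<n. d k)"
      unfolding prod_list_diag_prod D_def by (simp add: atLeast0LessThan)
    finally show ?thesis .
  qed
  ultimately show ?thesis
    using det_mult[of "shift_mat n j" n D] by (simp add: shift_mat_def D_def)
qed

lemma BijGroup_mult_UNIV:
  assumes "f \<in> Bij UNIV" "g \<in> Bij UNIV"
  shows "f \<otimes>\<^bsub>BijGroup UNIV\<^esub> g = f \<circ> g"
  using assms unfolding BijGroup_def compose_def by (simp add: restrict_UNIV comp_def)

lemma carrier_BijGroup [simp]: "carrier (BijGroup S) = Bij S"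
  unfolding BijGroup_def by simp

lemma BijGroup_one_UNIV: "\<one>\<^bsub>BijGroup UNIV\<^esub> = id"
  unfolding BijGroup_def by (simp add: restrict_UNIV id_def)

locale binary_field_extension =
  fixes q r m :: nat and \<alpha> :: "'k::{field,finite}"
  assumes q_eq: "q = 2 ^ m" and m_pos: "0 < m" and r_pos: "0 < r"
    and card_field: "card (UNIV :: 'k set) = q ^ r"
    and \<alpha>_nonzero: "\<alpha> \<noteq> 0"
    and \<alpha>_generates: "\<And>x. x \<noteq> 0 \<Longrightarrow> \<exists>n. x = \<alpha> ^ n"
begin

definition unit_order :: nat where
  "unit_order = q ^ r - 1"

(* the exponent of the norm map from F_(q^r) to F_q *)
definition norm_exp :: nat where
  "norm_exp = (\<Sum>k<r. q ^ k)"

lemma q_ge_2: "2 \<le> q"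
  using m_pos unfolding q_eq by (cases m) auto

lemma q_le_power_r: "q \<le> q ^ r"
  using power_increasing[of 1 r q] q_ge_2 r_pos by simp

lemma card_field_Suc_unit_order: "card (UNIV :: 'k set) = Suc unit_order"
  using q_le_power_r q_ge_2 card_field unfolding unit_order_def by simp

lemma unit_order_pos: "0 < unit_order"
  using q_le_power_r q_ge_2 unfolding unit_order_def by simp

lemma power_q_power_r: "x ^ q ^ r = (x :: 'k)"
  using power_card_eq_self[of x] unfolding card_field .

lemma \<alpha>_power_unit_order: "\<alpha> ^ unit_order = 1"
  using power_card_eq_self[of \<alpha>] \<alpha>_nonzero unfolding card_field_Suc_unit_order by simp

lemma \<alpha>_power_mod: "\<alpha> ^ a = \<alpha> ^ (a mod unit_order)"
proof -
  have "\<alpha> ^ a = \<alpha> ^ (unit_order * (a div unit_order) + a mod unit_order)"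
    by simp
  then show ?thesis
    by (simp only: power_add power_mult \<alpha>_power_unit_order power_one mult_1)
qed

lemma \<alpha>_power_eq_iff: "\<alpha> ^ a = \<alpha> ^ b \<longleftrightarrow> a mod unit_order = b mod unit_order"
proof -
  have "(\<lambda>k. \<alpha> ^ k) ` {..<unit_order} = UNIV - {0}"
  proof
    show "UNIV - {0} \<subseteq> (\<lambda>k. \<alpha> ^ k) ` {..<unit_order}"
    proof
      fix x :: 'k assume "x \<in> UNIV - {0}"
      then obtain n where "x = \<alpha> ^ (n mod unit_order)"
        using \<alpha>_generates \<alpha>_power_mod by blast
      then show "x \<in> (\<lambda>k. \<alpha> ^ k) ` {..<unit_order}"
        using unit_order_pos by simp
    qed
  qed (use \<alpha>_nonzero in auto)
  moreover have "card (UNIV - {0 :: 'k}) = unit_order"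
    using card_field_Suc_unit_order by (simp add: card_Diff_singleton)
  ultimately have inj: "inj_on (\<lambda>k. \<alpha> ^ k) {..<unit_order}"
    by (simp add: eq_card_imp_inj_on)
  have "\<alpha> ^ a = \<alpha> ^ b \<longleftrightarrow> \<alpha> ^ (a mod unit_order) = \<alpha> ^ (b mod unit_order)"
    by (simp only: \<alpha>_power_mod[of a] \<alpha>_power_mod[of b])
  also have "\<dots> \<longleftrightarrow> a mod unit_order = b mod unit_order"
    using unit_order_pos by (simp add: inj_on_eq_iff[OF inj])
  finally show ?thesis .
qed

lemma \<alpha>_power_eq_1_iff: "\<alpha> ^ a = 1 \<longleftrightarrow> unit_order dvd a"
  using \<alpha>_power_eq_iff[of a 0] by (simp add: mod_eq_0_iff_dvd)

lemma CHAR_field: "CHAR('k) = 2"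
  by (rule CHAR_eq_2_if_even_card) (use card_field q_eq m_pos r_pos in simp)

lemma q_power_eq_CHAR_power: "q ^ k = CHAR('k) ^ (m * k)"
  unfolding CHAR_field q_eq by (simp add: power_mult)

lemma frobenius_add: "(x + y) ^ q ^ k = x ^ q ^ k + (y :: 'k) ^ q ^ k"
  by (rule freshmans_dream') (simp_all add: CHAR_field q_power_eq_CHAR_power)

lemma frobenius_sum: "(\<Sum>i\<in>A. f i) ^ q ^ k = (\<Sum>i\<in>A. (f i :: 'k) ^ q ^ k)"
  by (rule freshmans_dream_sum') (simp_all add: CHAR_field q_power_eq_CHAR_power)

lemma frobenius_diff: "(x - y) ^ q ^ k = x ^ q ^ k - (y :: 'k) ^ q ^ k"
  using frobenius_add by (simp add: minus_CHAR_2[OF CHAR_field])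

lemma power_q_power_inj: "x ^ q ^ k = y ^ q ^ k \<Longrightarrow> x = (y :: 'k)"
  using frobenius_diff[of x y k] q_ge_2 by simp

lemma power_q_power_mod_r: "x ^ q ^ k = (x :: 'k) ^ q ^ (k mod r)"
proof -
  have "y ^ q ^ (r * t) = y" for y :: 'k and t
    by (induction t) (simp_all add: power_add power_mult power_q_power_r)
  moreover have "x ^ q ^ k = x ^ (q ^ (k mod r) * q ^ (r * (k div r)))"
    by (simp flip: power_add)
  then have "x ^ q ^ k = (x ^ q ^ (k mod r)) ^ q ^ (r * (k div r))"
    by (simp only: power_mult)
  ultimately show ?thesis
    by simp
qed

lemma Fq_power_q_power: "a \<in> Fq q \<Longrightarrow> a ^ q ^ k = (a :: 'k)"
  by (induction k) (simp_all add: Fq_def power_mult)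

lemma Fq_diff: "a \<in> Fq q \<Longrightarrow> b \<in> Fq q \<Longrightarrow> a - b \<in> (Fq q :: 'k set)"
  using frobenius_diff[of a b 1] by (simp add: Fq_def)

lemma Fq_linear_combination_power:
  "\<forall>i\<in>A. c i \<in> Fq q \<Longrightarrow> (\<Sum>i\<in>A. c i * b i) ^ q ^ k = (\<Sum>i\<in>A. c i * (b i :: 'k) ^ q ^ k)"
  by (simp add: frobenius_sum power_mult_distrib Fq_power_q_power)

lemma norm_exp_mult: "norm_exp * (q - 1) = unit_order"
proof -
  have "int (norm_exp * (q - 1)) = int unit_order"
    using q_le_power_r q_ge_2 unfolding norm_exp_def unit_order_def
    by (simp add: of_nat_diff of_nat_sum power_diff_1_eq mult.commute)
  then show ?thesis
    by (simp only: of_nat_eq_iff)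
qed

lemma norm_exp_pos: "0 < norm_exp"
  using norm_exp_mult unit_order_pos by (cases norm_exp) auto

lemma \<alpha>_power_norm_exp_in_Fq: "\<alpha> ^ (norm_exp * i) \<in> Fq q"
proof -
  have "norm_exp * i * q = norm_exp * i + i * unit_order"
    using q_ge_2 norm_exp_mult[symmetric] by (simp add: algebra_simps)
  then have "\<alpha> ^ (norm_exp * i * q) = \<alpha> ^ (norm_exp * i)"
    by (simp add: \<alpha>_power_eq_iff)
  then show ?thesis
    by (simp add: Fq_def power_mult)
qed

lemma card_Fq_ge: "q \<le> card (Fq q :: 'k set)"
proof -
  have inj: "inj_on (\<lambda>i. \<alpha> ^ (norm_exp * i)) {..<q - 1}"
  proof (rule inj_onI)
    fix i j assume "i \<in> {..<q - 1}" "j \<in> {..<q - 1}" "\<alpha> ^ (norm_exp * i) = \<alpha> ^ (norm_exp * j)"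
    moreover have "norm_exp * i < unit_order" if "i < q - 1" for i
      using that norm_exp_pos unfolding norm_exp_mult[symmetric] by simp
    ultimately show "i = j"
      using norm_exp_pos by (simp add: \<alpha>_power_eq_iff)
  qed
  have "insert 0 ((\<lambda>i. \<alpha> ^ (norm_exp * i)) ` {..<q - 1}) \<subseteq> Fq q"
    using \<alpha>_power_norm_exp_in_Fq q_ge_2 by (auto simp: Fq_def)
  moreover have "card (insert 0 ((\<lambda>i. \<alpha> ^ (norm_exp * i)) ` {..<q - 1})) = q"
    using card_image[OF inj] \<alpha>_nonzero q_ge_2 by (subst card_insert_disjoint) auto
  ultimately show ?thesis
    by (metis card_mono finite)
qed

lemma poly_power_q_power:
  fixes p :: "'k poly"
  assumes "\<And>i. coeff p i \<in> Fq q"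
  shows "poly p (x ^ q ^ k) = poly p x ^ q ^ k"
proof -
  have "poly p x ^ q ^ k = (\<Sum>i\<le>degree p. coeff p i * (x ^ i) ^ q ^ k)"
    unfolding poly_altdef by (rule Fq_linear_combination_power) (use assms in auto)
  then show ?thesis
    by (simp add: poly_altdef power_mult[symmetric] mult.commute)
qed

lemma power_q_less_unit_order:
  assumes "1 < r" "k < r"
  shows "q ^ k < unit_order"
proof -
  have "q ^ k \<le> q ^ (r - 1)" "q \<le> q ^ (r - 1)"
    using assms q_ge_2 power_increasing[of k "r - 1" q] power_increasing[of 1 "r - 1" q] by auto
  moreover have "q ^ r = q * q ^ (r - 1)"
    using assms by (simp flip: power_Suc)
  moreover have "2 * q ^ (r - 1) \<le> q * q ^ (r - 1)"
    using q_ge_2 by (rule mult_le_mono1)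
  ultimately have "q ^ k + 1 < q ^ r"
    using q_ge_2 by linarith
  then show ?thesis
    unfolding unit_order_def by simp
qed

lemma \<alpha>_conjugates_distinct: "inj_on (\<lambda>k. \<alpha> ^ q ^ k) {..<r}"
proof (cases "r = 1")
  case False
  then have "1 < r"
    using r_pos by simp
  show ?thesis
  proof (rule inj_onI)
    fix k l assume "k \<in> {..<r}" "l \<in> {..<r}" "\<alpha> ^ q ^ k = \<alpha> ^ q ^ l"
    then have "q ^ k = q ^ l"
      using power_q_less_unit_order[OF \<open>1 < r\<close>] by (simp add: \<alpha>_power_eq_iff)
    then show "k = l"
      using q_ge_2 by (simp add: power_inject_exp)
  qed
qed (auto simp: inj_on_def)

lemma Fq_poly_root_\<alpha>_degree_ge:
  assumes "\<And>i. coeff p i \<in> Fq q" "p \<noteq> 0" "poly p \<alpha> = 0"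
  shows "r \<le> degree p"
proof -
  have "(\<lambda>k. \<alpha> ^ q ^ k) ` {..<r} \<subseteq> {x. poly p x = 0}"
    using assms poly_power_q_power q_ge_2 by auto
  then have "card ((\<lambda>k. \<alpha> ^ q ^ k) ` {..<r}) \<le> card {x. poly p x = 0}"
    by (intro card_mono) auto
  then show ?thesis
    using card_poly_roots_bound[OF assms(2)] card_image[OF \<alpha>_conjugates_distinct] by simp
qed

lemma \<alpha>_power_coords_unique:
  assumes "\<forall>i<r. c i \<in> Fq q" "\<forall>i<r. d i \<in> Fq q"
    and "(\<Sum>i<r. c i * \<alpha> ^ i) = (\<Sum>i<r. d i * \<alpha> ^ i)" "i < r"
  shows "c i = d i"
proof -
  define p where "p = (\<Sum>i<r. monom (c i - d i) i)"
  have coeff_p: "coeff p n = (if n < r then c n - d n else 0)" for n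
    unfolding p_def by (simp add: coeff_sum)
  have "p = 0"
  proof (rule ccontr)
    assume "p \<noteq> 0"
    moreover have "\<And>n. coeff p n \<in> Fq q"
      using assms(1,2) q_ge_2 by (simp add: coeff_p Fq_diff) (simp add: Fq_def)
    moreover have "poly p \<alpha> = 0"
      using assms(3) unfolding p_def by (simp add: poly_sum poly_monom left_diff_distrib sum_subtractf)
    moreover have "degree p \<le> r - 1"
      by (rule degree_le) (auto simp: coeff_p)
    then have "degree p < r"
      using r_pos by linarith
    ultimately show False
      using Fq_poly_root_\<alpha>_degree_ge by fastforce
  qed
  then show ?thesis
    using coeff_p[of i] assms(4) by simp
qed

lemma \<alpha>_powers_span: "\<exists>c. (\<forall>i<r. c i \<in> Fq q) \<and> x = (\<Sum>i<r. c i * \<alpha> ^ i)"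
proof -
  let ?C = "PiE {..<r} (\<lambda>_. Fq q :: 'k set)"
  let ?E = "\<lambda>c. \<Sum>i<r. c i * \<alpha> ^ i"
  have "inj_on ?E ?C"
  proof (rule inj_onI)
    fix c d assume "c \<in> ?C" "d \<in> ?C" "?E c = ?E d"
    then show "c = d"
      by (intro PiE_ext[of c _ _ d]) (auto intro: \<alpha>_power_coords_unique)
  qed
  then have "card (?E ` ?C) = card (Fq q :: 'k set) ^ r"
    by (simp add: card_image card_PiE)
  moreover have "q ^ r \<le> card (Fq q :: 'k set) ^ r"
    using card_Fq_ge by (rule power_mono) simp
  ultimately have "?E ` ?C = UNIV"
    using card_field by (intro card_seteq) auto
  then have "x \<in> ?E ` ?C"
    by simp
  then obtain c where "c \<in> ?C" "x = ?E c"
    by blast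
  then show ?thesis
    by (intro exI[of _ c]) (simp add: PiE_iff)
qed

lemma Fq_basis_\<alpha>_powers: "Fq_basis q r (\<lambda>i. \<alpha> ^ i)"
  unfolding Fq_basis_def
proof
  fix x :: 'k
  obtain c where c: "\<forall>i<r. c i \<in> Fq q" "x = (\<Sum>i<r. c i * \<alpha> ^ i)"
    using \<alpha>_powers_span by blast
  let ?c = "\<lambda>i. if i < r then c i else 0"
  show "\<exists>!c. (\<forall>i<r. c i \<in> Fq q) \<and> (\<forall>i\<ge>r. c i = 0) \<and> x = (\<Sum>i<r. c i * \<alpha> ^ i)"
  proof (rule ex1I[of _ ?c])
    show "(\<forall>i<r. ?c i \<in> Fq q) \<and> (\<forall>i\<ge>r. ?c i = 0) \<and> x = (\<Sum>i<r. ?c i * \<alpha> ^ i)"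
    proof (intro conjI allI impI)
      show "?c i \<in> Fq q" if "i < r" for i
        using c(1) that by simp
      show "?c i = 0" if "r \<le> i" for i
        using that by simp
      show "x = (\<Sum>i<r. ?c i * \<alpha> ^ i)"
        unfolding c(2) by (rule sum.cong) simp_all
    qed
  next
    fix d assume d: "(\<forall>i<r. d i \<in> Fq q) \<and> (\<forall>i\<ge>r. d i = 0) \<and> x = (\<Sum>i<r. d i * \<alpha> ^ i)"
    then have "d i = c i" if "i < r" for i
      using c that by (auto intro!: \<alpha>_power_coords_unique[of d c])
    then show "d = ?c"
      using d by auto
  qed
qed

lemma Fq_coords:
  assumes "Fq_basis q r b"
  shows "(\<forall>i<r. Fq_coords q r b x i \<in> Fq q) \<and> (\<forall>i\<ge>r. Fq_coords q r b x i = 0)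
    \<and> x = (\<Sum>i<r. Fq_coords q r b x i * b i)"
proof -
  have "\<exists>!c. (\<forall>i<r. c i \<in> Fq q) \<and> (\<forall>i\<ge>r. c i = 0) \<and> x = (\<Sum>i<r. c i * b i)"
    using assms unfolding Fq_basis_def by blast
  then show ?thesis
    unfolding Fq_coords_def by (rule theI')
qed

lemma frobenius_powers_independent:
  assumes "\<And>x. (\<Sum>k<r. v k * x ^ q ^ k) = (0 :: 'k)" "k < r"
  shows "v k = 0"
proof -
  define P where "P = (\<Sum>k<r. monom (v k) (q ^ k))"
  have coeff_P: "coeff P n = (\<Sum>l<r. if q ^ l = n then v l else 0)" for n
    unfolding P_def by (simp add: coeff_sum coeff_monom)
  have "P = 0"
  proof (rule ccontr)
    assume "P \<noteq> 0"
    have "degree P \<le> q ^ (r - 1)"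
    proof (rule degree_le, intro allI impI)
      fix n assume "q ^ (r - 1) < n"
      moreover have "q ^ l \<le> q ^ (r - 1)" if "l < r" for l
        using that q_ge_2 by (intro power_increasing) auto
      ultimately show "coeff P n = 0"
        unfolding coeff_P by (intro sum.neutral) (metis lessThan_iff not_le)
    qed
    moreover have "{x. poly P x = 0} = UNIV"
      using assms(1) by (simp add: P_def poly_sum poly_monom)
    moreover have "q ^ (r - 1) < q ^ r"
      using q_ge_2 r_pos by (intro power_strict_increasing) auto
    ultimately show False
      using card_poly_roots_bound[OF \<open>P \<noteq> 0\<close>] card_field by simp
  qed
  have "coeff P (q ^ k) = (\<Sum>l<r. if l = k then v l else 0)"
    unfolding coeff_P using q_ge_2 by (intro sum.cong) (auto simp: power_inject_exp)
  then show ?thesis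
    using \<open>P = 0\<close> assms(2) by simp
qed

lemma q_polynomial_zero_if_zero_on_basis:
  assumes "Fq_basis q r b" "\<And>i. i < r \<Longrightarrow> (\<Sum>k<r. v k * b i ^ q ^ k) = 0"
  shows "(\<Sum>k<r. v k * x ^ q ^ k) = (0 :: 'k)"
proof -
  define c where "c = Fq_coords q r b x"
  have c: "\<forall>i<r. c i \<in> Fq q" "x = (\<Sum>i<r. c i * b i)"
    using Fq_coords[OF assms(1), of x] unfolding c_def by auto
  have "(\<Sum>k<r. v k * x ^ q ^ k) = (\<Sum>k<r. \<Sum>i<r. v k * (c i * b i ^ q ^ k))"
    using c by (simp add: Fq_linear_combination_power sum_distrib_left)
  also have "\<dots> = (\<Sum>i<r. c i * (\<Sum>k<r. v k * b i ^ q ^ k))"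
    by (subst sum.swap) (simp add: sum_distrib_left mult.left_commute)
  also have "\<dots> = 0"
    using assms(2) by simp
  finally show ?thesis .
qed

definition Moore_mat :: "(nat \<Rightarrow> 'k) \<Rightarrow> 'k mat" where
  "Moore_mat b = mat r r (\<lambda>(i, k). b i ^ q ^ k)"

lemma det_Moore_mat_nonzero:
  assumes "Fq_basis q r b"
  shows "det (Moore_mat b) \<noteq> 0"
proof
  assume "det (Moore_mat b) = 0"
  then obtain v where v: "v \<in> carrier_vec r" "v \<noteq> 0\<^sub>v r" "Moore_mat b *\<^sub>v v = 0\<^sub>v r"
    using det_0_iff_vec_prod_zero_field[of "Moore_mat b" r] by (auto simp: Moore_mat_def)
  have "(\<Sum>k<r. v $ k * b i ^ q ^ k) = 0" if "i < r" for i
  proof -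
    have "(Moore_mat b *\<^sub>v v) $ i = (\<Sum>k<r. v $ k * b i ^ q ^ k)"
      using that v(1) by (simp add: Moore_mat_def scalar_prod_def atLeast0LessThan mult.commute)
    then show ?thesis
      using v(3) that by simp
  qed
  then have "(\<Sum>k<r. v $ k * x ^ q ^ k) = 0" for x
    by (rule q_polynomial_zero_if_zero_on_basis[OF assms])
  then have "v $ k = 0" if "k < r" for k
    using frobenius_powers_independent that by blast
  then show False
    using v(1,2) by (auto simp: vec_eq_iff)
qed

lemma det_coord_mat_semilinear:
  fixes b :: "nat \<Rightarrow> 'k"
  assumes b: "Fq_basis q r b"
  shows "det (mat r r (\<lambda>(i, l). Fq_coords q r b (\<beta> * b l ^ q ^ j) i)) = \<beta> ^ norm_exp"
proof -
  define G where "G = mat r r (\<lambda>(i, l). Fq_coords q r b (\<beta> * b l ^ q ^ j) i)"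
  define Q where "Q = mat r r (\<lambda>(i, k). if i = (k + j) mod r then \<beta> ^ q ^ k else 0)"
  have carrier: "G \<in> carrier_mat r r" "Q \<in> carrier_mat r r" "Moore_mat b \<in> carrier_mat r r"
    by (simp_all add: G_def Q_def Moore_mat_def)
  have "transpose_mat G * Moore_mat b = Moore_mat b * Q"
  proof (rule eq_matI)
    fix l k assume "l < dim_row (Moore_mat b * Q)" "k < dim_col (Moore_mat b * Q)"
    then have lk: "l < r" "k < r"
      by (simp_all add: Moore_mat_def Q_def)
    define c where "c = Fq_coords q r b (\<beta> * b l ^ q ^ j)"
    have c: "\<forall>i<r. c i \<in> Fq q" "\<beta> * b l ^ q ^ j = (\<Sum>i<r. c i * b i)"
      using Fq_coords[OF b, of "\<beta> * b l ^ q ^ j"] unfolding c_def by auto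
    have "(transpose_mat G * Moore_mat b) $$ (l, k) = (\<Sum>i<r. c i * b i ^ q ^ k)"
      using lk by (simp add: G_def Moore_mat_def c_def scalar_prod_def atLeast0LessThan)
    also have "\<dots> = (\<beta> * b l ^ q ^ j) ^ q ^ k"
      using c by (simp add: Fq_linear_combination_power)
    also have "\<dots> = \<beta> ^ q ^ k * b l ^ q ^ (k + j)"
      by (simp add: power_mult_distrib power_add power_mult[symmetric] mult.commute)
    also have "\<dots> = b l ^ q ^ ((k + j) mod r) * \<beta> ^ q ^ k"
      by (simp add: power_q_power_mod_r[of "b l" "k + j"] mult.commute)
    also have "\<dots> = (\<Sum>i = 0..<r. if i = (k + j) mod r then b l ^ q ^ i * \<beta> ^ q ^ k else 0)"
      using r_pos by (simp add: sum.delta')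
    also have "\<dots> = (Moore_mat b * Q) $$ (l, k)"
    proof -
      have "(Moore_mat b * Q) $$ (l, k) =
          (\<Sum>i = 0..<r. b l ^ q ^ i * (if i = (k + j) mod r then \<beta> ^ q ^ k else 0))"
        using lk by (simp add: Moore_mat_def Q_def scalar_prod_def)
      also have "\<dots> = (\<Sum>i = 0..<r. if i = (k + j) mod r then b l ^ q ^ i * \<beta> ^ q ^ k else 0)"
        by (intro sum.cong) auto
      finally show ?thesis
        by simp
    qed
    finally show "(transpose_mat G * Moore_mat b) $$ (l, k) = (Moore_mat b * Q) $$ (l, k)" .
  qed (simp_all add: G_def Q_def Moore_mat_def)
  then have "det G * det (Moore_mat b) = det (Moore_mat b) * det Q"
    using carrier det_mult[of "transpose_mat G" r "Moore_mat b"] det_mult[of "Moore_mat b" r Q]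
      det_transpose[of G r] by (metis transpose_carrier_mat)
  moreover have "det Q = \<beta> ^ norm_exp"
    using det_weighted_shift_mat_CHAR_2[OF CHAR_field, of r j "\<lambda>k. \<beta> ^ q ^ k"]
    unfolding Q_def norm_exp_def by (simp add: power_sum)
  ultimately show ?thesis
    using det_Moore_mat_nonzero[OF b] unfolding G_def by (simp add: mult.commute)
qed

lemma Fq_det_semilinear: "Fq_det q r (\<lambda>z. \<beta> * z ^ q ^ j) = (\<beta> :: 'k) ^ norm_exp"
proof -
  have "Fq_basis q r (SOME b. Fq_basis q r (b :: nat \<Rightarrow> 'k))"
    using Fq_basis_\<alpha>_powers by (rule someI[of "Fq_basis q r"])
  then show ?thesis
    unfolding Fq_det_def Let_def by (rule det_coord_mat_semilinear)
qed

definition tau_sigma :: "nat \<Rightarrow> nat \<Rightarrow> 'k \<Rightarrow> 'k" where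
  "tau_sigma i j z = \<alpha> ^ i * z ^ q ^ j"

lemma tau_sigma_comp: "tau_sigma a j \<circ> tau_sigma i k = tau_sigma (a + i * q ^ j) (k + j)"
  by (simp add: tau_sigma_def fun_eq_iff power_mult_distrib power_add power_mult[symmetric] mult_ac)

lemma tau_sigma_id:
  "tau_sigma 0 0 = id" "tau_sigma unit_order 0 = id" "tau_sigma 0 r = id"
  by (simp_all add: tau_sigma_def fun_eq_iff \<alpha>_power_unit_order power_q_power_r)

lemma tau_sigma_Bij: "tau_sigma i j \<in> Bij UNIV"
proof -
  have "inj (tau_sigma i j)"
    by (rule injI) (use \<alpha>_nonzero power_q_power_inj in \<open>simp add: tau_sigma_def\<close>)
  then show ?thesis
    by (simp add: Bij_def bij_def finite_UNIV_inj_surj)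
qed

lemma GammaL_elements: "g \<in> GammaL q \<alpha> \<Longrightarrow> \<exists>i j. g = tau_sigma i j"
  unfolding GammaL_def
proof (induction rule: generate.induct)
  case one
  then show ?case
    by (metis BijGroup_one_UNIV tau_sigma_id(1))
next
  case (incl h)
  then have "h = tau_sigma 1 0 \<or> h = tau_sigma 0 1"
    by (auto simp: tau_sigma_def)
  then show ?case
    by blast
next
  case (inv h)
  then have "h = tau_sigma 1 0 \<or> h = tau_sigma 0 1"
    by (auto simp: tau_sigma_def fun_eq_iff)
  moreover have "tau_sigma (unit_order - 1) 0 \<circ> tau_sigma 1 0 = id"
    "tau_sigma 0 (r - 1) \<circ> tau_sigma 0 1 = id"
    using unit_order_pos r_pos by (simp_all add: tau_sigma_comp tau_sigma_id)
  ultimately obtain a b i j where "h = tau_sigma a b" "tau_sigma i j \<circ> h = id"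
    by blast
  then have "inv\<^bsub>BijGroup UNIV\<^esub> h = tau_sigma i j"
    by (intro group.inv_equality[OF group_BijGroup])
      (simp_all add: BijGroup_mult_UNIV BijGroup_one_UNIV tau_sigma_Bij)
  then show ?case
    by blast
next
  case (eng h1 h2)
  then obtain a j i k where "h1 = tau_sigma a j" "h2 = tau_sigma i k"
    by blast
  then show ?case
    by (auto simp: BijGroup_mult_UNIV tau_sigma_Bij tau_sigma_comp)
qed

lemma tau_power_in_GammaL: "tau_sigma n 0 \<in> GammaL q \<alpha>"
proof (induction n)
  case 0
  have "\<one>\<^bsub>BijGroup UNIV\<^esub> \<in> GammaL q \<alpha>"
    unfolding GammaL_def by (rule generate.one)
  then show ?case
    by (metis BijGroup_one_UNIV tau_sigma_id(1))
next
  case (Suc n)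
  have "tau_sigma 1 0 \<in> GammaL q \<alpha>"
    unfolding GammaL_def by (rule generate.incl) (simp add: tau_sigma_def fun_eq_iff)
  then have "tau_sigma 1 0 \<otimes>\<^bsub>BijGroup UNIV\<^esub> tau_sigma n 0 \<in> GammaL q \<alpha>"
    using Suc unfolding GammaL_def by (rule generate.eng)
  then show ?case
    by (simp add: BijGroup_mult_UNIV tau_sigma_Bij tau_sigma_comp)
qed

lemma tau_sigma_in_GL: "tau_sigma i j \<in> GL_Fq q"
  using tau_sigma_Bij
  by (auto simp: GL_Fq_def Fq_linear_def Bij_def tau_sigma_def frobenius_add power_mult_distrib
      Fq_power_q_power distrib_left mult.left_commute)

lemma Fq_det_tau_sigma: "Fq_det q r (tau_sigma i j) = \<alpha> ^ (i * norm_exp)"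
  using Fq_det_semilinear[of "\<alpha> ^ i" j] by (simp add: tau_sigma_def[abs_def] power_mult)

theorem transitive_GammaL1_iff: "transitive_on_nonzero (GammaL1 q r \<alpha>) \<longleftrightarrow> q = 2"
proof
  assume "transitive_on_nonzero (GammaL1 q r \<alpha>)"
  then obtain g where g: "g \<in> GammaL1 q r \<alpha>" "g 1 = \<alpha>"
    using \<alpha>_nonzero unfolding transitive_on_nonzero_def by (metis one_neq_zero)
  then obtain i j where ij: "g = tau_sigma i j"
    using GammaL_elements unfolding GammaL1_def by blast
  have "\<alpha> ^ i = \<alpha>"
    using g(2) by (simp add: ij tau_sigma_def)
  moreover have "\<alpha> ^ (i * norm_exp) = 1"
    using g(1) by (simp add: ij GammaL1_def SL_Fq_def Fq_det_tau_sigma)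
  ultimately have "unit_order dvd norm_exp"
    by (simp add: power_mult \<alpha>_power_eq_1_iff)
  then have "norm_exp * (q - 1) \<le> norm_exp * 1"
    using norm_exp_pos unfolding norm_exp_mult by (simp add: dvd_imp_le)
  then show "q = 2"
    using norm_exp_pos q_ge_2 by simp
next
  assume "q = 2"
  then have "norm_exp = unit_order"
    using norm_exp_mult by simp
  show "transitive_on_nonzero (GammaL1 q r \<alpha>)"
    unfolding transitive_on_nonzero_def
  proof (intro allI impI)
    fix x y :: 'k assume "x \<noteq> 0" "y \<noteq> 0"
    then obtain n where n: "y / x = \<alpha> ^ n"
      using \<alpha>_generates by (metis divide_eq_0_iff)
    have "tau_sigma n 0 \<in> GammaL1 q r \<alpha>"
      using tau_power_in_GammaL tau_sigma_in_GL \<open>norm_exp = unit_order\<close>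
      by (simp add: GammaL1_def SL_Fq_def Fq_det_tau_sigma \<alpha>_power_eq_1_iff)
    moreover have "tau_sigma n 0 x = y"
      using \<open>x \<noteq> 0\<close> by (simp add: tau_sigma_def flip: n)
    ultimately show "\<exists>g\<in>GammaL1 q r \<alpha>. g x = y"
      by blast
  qed
qed

end

lemma generator_nonzero:
  fixes \<alpha> :: "'a::{field,finite}"
  assumes "2 < card (UNIV :: 'a set)" "\<forall>x. x \<noteq> 0 \<longrightarrow> (\<exists>n. x = \<alpha> ^ n)"
  shows "\<alpha> \<noteq> 0"
proof
  assume "\<alpha> = 0"
  then have "UNIV \<subseteq> {0, 1 :: 'a}"
    using assms(2) by (auto simp: power_0_left split: if_splits)
  then have "card (UNIV :: 'a set) \<le> card {0, 1 :: 'a}"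
    by (intro card_mono) auto
  then show False
    using assms(1) by (simp add: card_insert_if)
qed

theorem lemma3p3:
  fixes r m q :: nat and \<alpha> :: "'k::{field,finite}"
  assumes "prime r" and "odd r" and "m \<ge> 1" and "q = 2 ^ m"
    and "card (UNIV :: 'k set) = q ^ r"
    and "\<forall>x::'k. x \<noteq> 0 \<longrightarrow> (\<exists>n::nat. x = \<alpha> ^ n)"
  shows "transitive_on_nonzero (GammaL1 q r \<alpha>) \<longleftrightarrow> q = 2"
proof -
  (* Primality of r only serves to give 2 \<le> r, which excludes \<alpha> = 0 over F_2. *)
  have "2 \<le> r"
    using \<open>prime r\<close> by (rule prime_ge_2_nat)
  have "(2::nat) ^ 2 \<le> 2 ^ r"
    using \<open>2 \<le> r\<close> by (rule power_increasing) simp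
  moreover have "(2::nat) ^ r \<le> q ^ r"
    using power_increasing[of 1 m "2::nat"] assms(3,4) by (intro power_mono) auto
  ultimately have "\<alpha> \<noteq> 0"
    using assms(5,6) by (intro generator_nonzero) auto
  then interpret binary_field_extension q r m \<alpha>
    using assms \<open>2 \<le> r\<close> by unfold_locales auto
  show ?thesis
    by (rule transitive_GammaL1_iff)
qed

end
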